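(* Let $d\ge 7$ be an integer, $\omega=\sqrt{d^2-8d+8}$, and let $\phi_n$ ($n\ge 0$) be the normalized eigenfunctions ($\|\phi_n\|=1$) of $A$ with eigenvalues $\lambda_n=-\frac{\gamma}{2}+n$. Then $$\Bigl\|\frac{\phi_n(y)}{y}\Bigr\|\le \frac{4n}{\omega}+1\qquad\text{for all } n\ge 0,$$ where $\|\cdot\|$ is the norm of $\mathcal H$ applied to the function $y\mapsto\phi_n(y)/y$.
   Context: Let $\gamma=\frac12(d-2-\omega)$, $\rho(y)=y^{d-1}e^{-y^2/4}$, $\mathcal H=L^2((0,\infty),\rho\,dy)$ with inner product $\langle f,g\rangle=\int_0^\infty fg\rho\,dy$ and norm $\|\cdot\|$. $\mathcal A\phi=-\frac1\rho(\rho\phi')'-\frac{d-1}{y^2}\phi$ on $C_0^\infty((0,\infty))$, and $A$ is its Friedrichs extension. The normalized eigenfunctions of $A$ are $\phi_n(y)=\mathcal N_n y^{-\gamma}L_n^{(\omega/2)}(y^2/4)$, where $L_n^{(a)}$ is the generalized Laguerre polynomial and $\mathcal N_n>0$ is a normalizing constant. *)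

theory Defs
  imports "HOL-Analysis.Analysis"
begin

definition laguerre :: "nat \<Rightarrow> real \<Rightarrow> real \<Rightarrow> real" where
  "laguerre n a x = (\<Sum>k\<le>n. (-1)^k * ((real n + a) gchoose (n - k)) * x^k / fact k)"

definition omega :: "nat \<Rightarrow> real" where
  "omega d = sqrt (real d ^ 2 - 8 * real d + 8)"

definition gam :: "nat \<Rightarrow> real" where
  "gam d = (real d - 2 - omega d) / 2"

definition weight :: "nat \<Rightarrow> real \<Rightarrow> real" where
  "weight d y = y powr (real d - 1) * exp (- (y^2) / 4)"

text \<open>Squared norm in H = L^2((0,oo), rho dy), as an extended nonnegative real.\<close>
definition Hnorm_sq :: "nat \<Rightarrow> (real \<Rightarrow> real) \<Rightarrow> ennreal" where
  "Hnorm_sq d f = (\<integral>\<^sup>+ y \<in> {0<..}. ennreal ((f y)^2 * weight d y) \<partial>lborel)"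

text \<open>Eigenfunction phi_n with normalizing constant N.\<close>
definition phi :: "nat \<Rightarrow> real \<Rightarrow> nat \<Rightarrow> real \<Rightarrow> real" where
  "phi d N n y = N * y powr (- gam d) * laguerre n (omega d / 2) (y^2 / 4)"

end

theory Submission
  imports Defs "HOL-Computational_Algebra.Formal_Power_Series"
begin

text \<open>The norm of \<open>\<phi>\<^sub>n/y\<close> can be computed exactly:
  \<open>\<parallel>\<phi>\<^sub>n/y\<parallel>\<^sup>2 = \<parallel>\<phi>\<^sub>n\<parallel>\<^sup>2 / (2\<omega>) = 1 / (2\<omega>)\<close>, which is at most \<open>1\<close> since \<open>\<omega> \<ge> 1\<close> for \<open>d \<ge> 7\<close>.
  Put \<open>a = \<omega>/2\<close> and let \<open>c\<^sub>k\<close> be the coefficients of \<open>L\<^sub>n\<^sup>(\<^sup>a\<^sup>)\<close>. Expanding the square of the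
  Laguerre polynomial and substituting \<open>t = y\<^sup>2/4\<close> turns both weighted integrals into sums
  \<open>\<Sum>\<^sub>j\<^sub>,\<^sub>k c\<^sub>j c\<^sub>k \<Gamma>(b + j + k)\<close>, with \<open>b = a + 1\<close> for \<open>\<phi>\<^sub>n\<close> and \<open>b = a\<close> for \<open>\<phi>\<^sub>n/y\<close>.
  By Chu-Vandermonde, \<open>\<Sum>\<^sub>k c\<^sub>k \<Gamma>(a + j + k) = 0\<close> for \<open>1 \<le> j \<le> n\<close> (orthogonality of
  \<open>L\<^sub>n\<^sup>(\<^sup>a\<^sup>)\<close> to \<open>t\<^sup>j\<^sup>-\<^sup>1\<close>), so after writing \<open>\<Gamma>(a + 1 + j + k) = (a + j + k) \<Gamma>(a + j + k)\<close>
  only the summand \<open>a\<close> survives: the first sum is \<open>a\<close> times the second.\<close>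

lemma powr_add_one_eq_powr_diff_one_times_square:
  fixes y e :: real
  assumes "y > 0"
  shows "y powr (e + 1) = y powr (e - 1) * y^2"
proof -
  have "y powr (e + 1) = y powr ((e - 1) + 2)"
    by (rule arg_cong [where f = "(powr) y"]) simp
  also have "\<dots> = y powr (e - 1) * y^2"
    using assms by (simp only: powr_add powr_numeral)
  finally show ?thesis .
qed

lemma Gamma_has_integral_real_open:
  fixes x :: real
  assumes "x > 0"
  shows "((\<lambda>t. t powr (x - 1) / exp t) has_integral Gamma x) {0<..}"
proof -
  have "((\<lambda>t. t powr (x - 1) / exp t) has_integral Gamma x) {0..}"
    by (rule Gamma_integral_real) fact
  hence "((\<lambda>t. if t \<in> {0<..} then t powr (x - 1) / exp t else 0) has_integral Gamma x) {0..}"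
    by (rule has_integral_spike [of "{0}", rotated 2]) auto
  thus ?thesis
    by (subst (asm) has_integral_restrict) auto
qed

lemma gaussian_moment_has_integral:
  fixes s :: real
  assumes "s > -1"
  shows "((\<lambda>y. y powr s * exp (- (y^2) / 4)) has_integral 2 powr s * Gamma ((s + 1) / 2)) {0<..}"
proof -
  define x where "x = (s + 1) / 2"
  define f where "f = (\<lambda>t::real. t powr (x - 1) / exp t)"
  have "x > 0" using assms by (simp add: x_def)
  then have f_integral: "(f has_integral Gamma x) {0<..}"
    unfolding f_def by (rule Gamma_has_integral_real_open)
  have f_abs: "f absolutely_integrable_on {0<..}"
    by (rule nonnegative_absolutely_integrable_1) (use f_integral in \<open>auto simp: f_def\<close>)
  have image: "(\<lambda>y::real. y^2 / 4) ` {0<..} = {0<..}"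
  proof (intro equalityI subsetI)
    fix t :: real assume "t \<in> {0<..}"
    hence "t = (2 * sqrt t)^2 / 4 \<and> 2 * sqrt t \<in> {0<..}" by (auto simp: power_mult_distrib)
    thus "t \<in> (\<lambda>y::real. y^2 / 4) ` {0<..}" by blast
  qed auto
  have deriv: "\<And>y. y \<in> {0<..} \<Longrightarrow>
      ((\<lambda>y::real. y^2 / 4) has_field_derivative (y / 2)) (at y within {0<..})"
    by (auto intro!: derivative_eq_intros)
  have inj: "inj_on (\<lambda>y::real. y^2 / 4) {0<..}"
    by (auto simp: inj_on_def power2_eq_iff)
  have "(\<lambda>y. \<bar>y / 2\<bar> * f (y^2 / 4)) absolutely_integrable_on {0<..} \<and>
        integral {0<..} (\<lambda>y. \<bar>y / 2\<bar> * f (y^2 / 4)) = Gamma x"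
    using has_absolute_integral_change_of_variables_1'[OF _ deriv inj, of f "Gamma x"]
      f_abs f_integral image
    by (auto simp: integral_unique)
  hence substituted: "((\<lambda>y. \<bar>y / 2\<bar> * f (y^2 / 4)) has_integral Gamma x) {0<..}"
    by (metis absolutely_integrable_on_def has_integral_integral)
  have "\<bar>y / 2\<bar> * f (y^2 / 4) = 2 powr (-s) * (y powr s * exp (- (y^2) / 4))"
    if "y \<in> {0<..}" for y :: real
  proof -
    have y: "y > 0" using that by auto
    have "y^2 / 4 = (y / 2) powr 2" using y by (simp add: powr_realpow power_divide)
    hence "(y^2 / 4) powr (x - 1) = (y / 2) powr (2 * (x - 1))"
      by (simp add: powr_powr)
    also have "2 * (x - 1) = s - 1" by (simp add: x_def)
    finally have "(y^2 / 4) powr (x - 1) = (y / 2) powr (s - 1)" .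
    moreover have "y / 2 * (y / 2) powr (s - 1) = (y / 2) powr s"
      using y by (simp add: powr_diff)
    moreover have "(y / 2) powr s = y powr s * 2 powr (-s)"
      using y by (simp add: powr_divide powr_minus field_simps)
    ultimately show ?thesis using y by (simp add: f_def exp_minus field_simps)
  qed
  with substituted have "((\<lambda>y. 2 powr (-s) * (y powr s * exp (- (y^2) / 4))) has_integral Gamma x) {0<..}"
    by (rule has_integral_eq[rotated]) auto
  from has_integral_mult_right[OF this, of "2 powr s"] show ?thesis
    by (simp add: x_def powr_minus mult.assoc [symmetric])
qed

definition laguerre_coeff :: "nat \<Rightarrow> real \<Rightarrow> nat \<Rightarrow> real" where
  "laguerre_coeff n a k = (-1)^k * ((real n + a) gchoose (n - k)) / fact k"

lemma laguerre_eq_sum_coeff: "laguerre n a x = (\<Sum>k\<le>n. laguerre_coeff n a k * x^k)"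
  unfolding laguerre_def laguerre_coeff_def by (simp add: field_simps)

lemma laguerre_coeff_Gamma_orthogonal:
  fixes a :: real
  assumes a: "a > 0" and j: "1 \<le> j" "j \<le> n"
  shows "(\<Sum>k\<le>n. laguerre_coeff n a k * Gamma (a + real j + real k)) = 0"
proof -
  define b where "b = a + real j"
  have b: "b \<notin> \<int>\<^sub>\<le>\<^sub>0" using a by (auto simp: b_def elim!: nonpos_Ints_cases)
  have "laguerre_coeff n a k * Gamma (a + real j + real k)
      = Gamma b * (((-b) gchoose k) * ((real n + a) gchoose (n - k)))" for k
    using pochhammer_Gamma[OF b, of k] Gamma_eq_zero_iff[of b] b
    by (simp add: laguerre_coeff_def gbinomial_pochhammer b_def field_simps)
  moreover have "(\<Sum>k=0..n. ((-b) gchoose k) * ((real n + a) gchoose (n - k))) = 0"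
  proof -
    have "(\<Sum>k=0..n. ((-b) gchoose k) * ((real n + a) gchoose (n - k))) = (-b + (real n + a)) gchoose n"
      by (rule gbinomial_Vandermonde)
    also have "-b + (real n + a) = real (n - j)"
      using j by (simp add: b_def of_nat_diff)
    also have "real (n - j) gchoose n = real ((n - j) choose n)"
      by (simp add: binomial_gbinomial)
    also have "(n - j) choose n = 0"
      using j by (simp add: binomial_eq_0)
    finally show ?thesis by simp
  qed
  ultimately show ?thesis
    by (simp add: sum_distrib_left [symmetric] atMost_atLeast0)
qed

definition laguerre_Gamma_form :: "nat \<Rightarrow> real \<Rightarrow> real \<Rightarrow> real" where
  "laguerre_Gamma_form n a b =
     (\<Sum>j\<le>n. \<Sum>k\<le>n. laguerre_coeff n a j * laguerre_coeff n a k * Gamma (b + real j + real k))"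

lemma laguerre_Gamma_form_shift:
  fixes a :: real
  assumes a: "a > 0"
  shows "laguerre_Gamma_form n a (a + 1) = a * laguerre_Gamma_form n a a"
proof -
  define c where "c = laguerre_coeff n a"
  define G where "G = (\<lambda>j k. Gamma (a + real j + real k))"
  define T where "T = (\<Sum>j\<le>n. \<Sum>k\<le>n. c j * c k * real j * G j k)"
  have "T = (\<Sum>j\<le>n. c j * real j * (\<Sum>k\<le>n. c k * G j k))"
    unfolding T_def by (simp add: sum_distrib_left mult_ac)
  also have "\<dots> = 0"
  proof (intro sum.neutral ballI)
    fix j assume "j \<in> {..n}"
    then show "c j * real j * (\<Sum>k\<le>n. c k * G j k) = 0"
      using laguerre_coeff_Gamma_orthogonal[OF a, of j n]
      by (cases "j = 0") (auto simp: c_def G_def)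
  qed
  finally have T0: "T = 0" .
  have T_swap: "(\<Sum>j\<le>n. \<Sum>k\<le>n. c j * c k * real k * G j k) = T"
    unfolding T_def G_def by (subst sum.swap) (simp add: mult_ac add_ac)
  have "Gamma (a + 1 + real j + real k) = (a + real j + real k) * G j k" for j k
  proof -
    have "a + real j + real k \<notin> \<int>\<^sub>\<le>\<^sub>0" using a by (auto elim!: nonpos_Ints_cases)
    from Gamma_plus1[OF this] show ?thesis by (simp add: G_def add_ac)
  qed
  then have "laguerre_Gamma_form n a (a + 1)
      = a * (\<Sum>j\<le>n. \<Sum>k\<le>n. c j * c k * G j k) + T + (\<Sum>j\<le>n. \<Sum>k\<le>n. c j * c k * real k * G j k)"
    unfolding laguerre_Gamma_form_def T_def c_def [symmetric]
    by (simp add: sum_distrib_left sum.distrib[symmetric] algebra_simps)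
  moreover have "laguerre_Gamma_form n a a = (\<Sum>j\<le>n. \<Sum>k\<le>n. c j * c k * G j k)"
    by (simp add: laguerre_Gamma_form_def c_def G_def)
  ultimately show ?thesis using T0 T_swap by simp
qed

lemma laguerre_square_gaussian_moment:
  fixes a e :: real
  assumes e: "e > -1"
  shows "((\<lambda>y. y powr e * exp (- (y^2) / 4) * (laguerre n a (y^2 / 4))^2)
           has_integral 2 powr e * laguerre_Gamma_form n a ((e + 1) / 2)) {0<..}"
proof -
  define c where "c = laguerre_coeff n a"
  define m where "m = (\<lambda>j k y. y powr (e + 2 * real (j + k)) * exp (- (y^2) / 4))"
  have "((\<lambda>y. c j * c k / 4^(j + k) * m j k y)
          has_integral 2 powr e * (c j * c k * Gamma ((e + 1) / 2 + real j + real k))) {0<..}" for j k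
  proof -
    have "((\<lambda>y. c j * c k / 4^(j + k) * m j k y) has_integral c j * c k / 4^(j + k) *
        (2 powr (e + 2 * real (j + k)) * Gamma ((e + 2 * real (j + k) + 1) / 2))) {0<..}"
      unfolding m_def using e by (intro has_integral_mult_right gaussian_moment_has_integral) simp
    moreover have "(2::real) powr (e + 2 * real (j + k)) = 2 powr e * 4^(j + k)"
      by (simp add: powr_add powr_powr [symmetric] powr_realpow power_add)
    moreover have "Gamma ((e + 2 * real (j + k) + 1) / 2) = Gamma ((e + 1) / 2 + real j + real k)"
      by (rule arg_cong [where f = Gamma]) (simp add: field_simps)
    ultimately show ?thesis
      by (simp only:) (simp add: field_simps)
  qed
  then have "((\<lambda>y. \<Sum>j\<le>n. \<Sum>k\<le>n. c j * c k / 4^(j + k) * m j k y)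
      has_integral 2 powr e * laguerre_Gamma_form n a ((e + 1) / 2)) {0<..}"
    unfolding laguerre_Gamma_form_def c_def [symmetric] sum_distrib_left
    by (intro has_integral_sum finite_atMost ballI)
  moreover have "(\<Sum>j\<le>n. \<Sum>k\<le>n. c j * c k / 4^(j + k) * m j k y)
      = y powr e * exp (- (y^2) / 4) * (laguerre n a (y^2 / 4))^2" if "y \<in> {0<..}" for y
  proof -
    have "y powr (e + 2 * real (j + k)) = y powr e * y^(2 * (j + k))" for j k
      using that by (simp add: powr_add flip: powr_realpow)
    then show ?thesis
      unfolding laguerre_eq_sum_coeff c_def [symmetric] m_def
      by (simp add: power2_eq_square sum_product sum_distrib_left power_divide power_add
          power_mult field_simps)
  qed
  ultimately show ?thesis
    by (rule has_integral_eq[rotated])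
qed

lemma Hnorm_sq_eq_of_has_integral:
  assumes g: "(g has_integral V) {0<..}"
    and eq: "\<And>y. y > 0 \<Longrightarrow> (F y)^2 * weight d y = g y"
  shows "Hnorm_sq d F = ennreal V"
proof -
  have "Hnorm_sq d F = (\<integral>\<^sup>+ y. ennreal (indicator {0<..} y * g y) \<partial>lborel)"
    unfolding Hnorm_sq_def by (intro nn_integral_cong) (auto simp: eq split: split_indicator)
  also have "\<dots> = ennreal V"
  proof (rule nn_integral_has_integral_lebesgue[OF _ g])
    fix y :: real assume "y \<in> {0<..}"
    then have "g y = (F y)^2 * weight d y" using eq by simp
    also have "\<dots> \<ge> 0" by (simp add: weight_def)
    finally show "0 \<le> g y" .
  qed
  finally show ?thesis .
qed

lemma phi_sq_weight:
  assumes "y > 0"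
  shows "(phi d N n y)^2 * weight d y
    = N^2 * (y powr (omega d + 1) * exp (- (y^2) / 4) * (laguerre n (omega d / 2) (y^2 / 4))^2)"
proof -
  have "(y powr (- gam d))^2 * y powr (real d - 1) = y powr (- gam d + - gam d + (real d - 1))"
    by (simp only: power2_eq_square powr_add)
  also have "- gam d + - gam d + (real d - 1) = omega d + 1"
    by (simp add: gam_def field_simps)
  finally show ?thesis
    unfolding phi_def weight_def by (simp add: power_mult_distrib mult_ac)
qed

lemma Hnorm_sq_phi_div_y:
  assumes "omega d > 0"
  shows "Hnorm_sq d (\<lambda>y. phi d N n y / y)
    = ennreal (N^2 * 2 powr (omega d - 1) * laguerre_Gamma_form n (omega d / 2) (omega d / 2))"
proof -
  define g where "g = (\<lambda>y. N^2 * (y powr (omega d - 1) * exp (- (y^2) / 4)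
      * (laguerre n (omega d / 2) (y^2 / 4))^2))"
  have "omega d - 1 > -1" using assms by simp
  from has_integral_mult_right [OF laguerre_square_gaussian_moment [OF this], of "N^2"]
  have "(g has_integral N^2 * 2 powr (omega d - 1) * laguerre_Gamma_form n (omega d / 2) (omega d / 2)) {0<..}"
    by (simp add: g_def mult.assoc)
  moreover have "(phi d N n y / y)^2 * weight d y = g y" if y: "y > 0" for y
  proof -
    have "(phi d N n y / y)^2 * weight d y = (phi d N n y)^2 * weight d y / y^2"
      by (simp add: power_divide)
    also have "\<dots> = N^2 * (y powr (omega d + 1) / y^2 * exp (- (y^2) / 4)
        * (laguerre n (omega d / 2) (y^2 / 4))^2)"
      by (simp only: phi_sq_weight [OF y]) (simp add: mult_ac)
    also have "y powr (omega d + 1) / y^2 = y powr (omega d - 1)"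
      using y by (simp add: powr_add_one_eq_powr_diff_one_times_square)
    finally show ?thesis
      by (simp only: g_def mult.assoc)
  qed
  ultimately show ?thesis
    by (rule Hnorm_sq_eq_of_has_integral)
qed

lemma Hnorm_sq_phi:
  assumes "omega d > 0"
  shows "Hnorm_sq d (phi d N n)
    = ennreal (2 * omega d * (N^2 * 2 powr (omega d - 1) * laguerre_Gamma_form n (omega d / 2) (omega d / 2)))"
proof -
  have "omega d + 1 > -1" using assms by simp
  from has_integral_mult_right [OF laguerre_square_gaussian_moment [OF this], of "N^2"]
  have "((\<lambda>y. N^2 * (y powr (omega d + 1) * exp (- (y^2) / 4) * (laguerre n (omega d / 2) (y^2 / 4))^2))
      has_integral N^2 * (2 powr (omega d + 1) * laguerre_Gamma_form n (omega d / 2) ((omega d + 1 + 1) / 2))) {0<..}"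
    by simp
  also have "(omega d + 1 + 1) / 2 = omega d / 2 + 1"
    by simp
  also have "N^2 * (2 powr (omega d + 1) * laguerre_Gamma_form n (omega d / 2) (omega d / 2 + 1))
      = 2 * omega d * (N^2 * 2 powr (omega d - 1) * laguerre_Gamma_form n (omega d / 2) (omega d / 2))"
    using assms
    by (simp add: powr_add_one_eq_powr_diff_one_times_square laguerre_Gamma_form_shift)
  finally show ?thesis
    by (rule Hnorm_sq_eq_of_has_integral [OF _ phi_sq_weight])
qed

lemma omega_ge_one:
  assumes "d \<ge> 7"
  shows "omega d \<ge> 1"
proof -
  have "(real d - 7) * (real d - 1) \<ge> 0" using assms by simp
  then have "real d ^ 2 - 8 * real d + 8 \<ge> 1" by (simp add: algebra_simps power2_eq_square)
  then show ?thesis unfolding omega_def by simp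
qed

theorem mainTheorem5:
  fixes d n :: nat and N :: real
  assumes "d \<ge> 7"
    and "N > 0"
    and "Hnorm_sq d (phi d N n) = 1"
  shows "Hnorm_sq d (\<lambda>y. phi d N n y / y) \<le> ennreal ((4 * real n / omega d + 1) ^ 2)"
proof -
  have omega: "omega d \<ge> 1" using assms(1) by (rule omega_ge_one)
  define v where "v = N^2 * 2 powr (omega d - 1) * laguerre_Gamma_form n (omega d / 2) (omega d / 2)"
  have "2 * omega d * v = 1"
    using assms(3) Hnorm_sq_phi[of d N n] omega by (simp add: v_def)
  then have "v = 1 / (2 * omega d)" using omega by (simp add: field_simps)
  then have "v \<le> 1" using omega by simp
  also have "1 \<le> (4 * real n / omega d + 1) ^ 2"
    using omega by (intro one_le_power) simp
  finally show ?thesis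
    using Hnorm_sq_phi_div_y[of d N n] omega by (simp add: v_def ennreal_leI)
qed

end
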